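(* In the single-item all-pay auction with budgets described in the context, given the profile $(B_1,B_2,v_1,v_2)$, if a Nash equilibrium $(F_1,F_2)$ exists, then: Case (1): if $B_1=B_2$ and $B_2<\frac12\min\{v_1,v_2\}$, then $\underline{x}_i=\overline{x}_i$ for every $i\in\{1,2\}$; Case (2): if $B_1=B_2$ and $B_1=\frac12\min\{v_1,v_2\}$, then, letting $i=\arg\min_{i'\in\{1,2\}}v_{i'}$, either $\underline{x}_i=\overline{x}_i$ and $\underline{x}_{-i}=\overline{x}_{-i}$, or $\underline{x}_i=0$ and $\underline{x}_{-i}=\overline{x}_{-i}$; Case (3): if $B_1\neq B_2$, then $\underline{x}_1=\underline{x}_2=0$.
   Context: Single-item all-pay auction with budgets. There are two players $i\in\{1,2\}$; $-i$ denotes the opponent of $i$. Player $i$ has budget $B_i\ge 0$ and valuation $v_i>0$ for a single item. A pure strategy of player $i$ is a bid $x_i\in[0,B_i]$; a mixed strategy is a probability distribution on $[0,B_i]$, described by its cumulative distribution function $F_i$. The player with the higher bid wins the item. Tie-breaking: if $x_1=x_2=\min\{B_1,B_2,v_1,v_2\}$ and $\min\{B_i,v_i\}>\min\{B_{-i},v_{-i}\}$ for some $i$, then player $i$ wins; in all other ties each player wins with probability $\frac12$. Player $i$'s utility is $v_i-x_i$ if he wins and $-x_i$ if he loses. A Nash equilibrium is a pair $(F_1,F_2)$ such that each $F_i$ maximizes player $i$'s expected utility against $F_{-i}$ over all mixed strategies on $[0,B_i]$. $Supp(F_i)$ is the support of $F_i$, $\overline{x}_i=\sup Supp(F_i)$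 and $\underline{x}_i=\inf Supp(F_i)$. *)

theory Defs
  imports "HOL-Probability.Probability"
begin

text \<open>Players are indexed by the naturals 1 and 2; the opponent of i is 3 - i.
  A profile is given by budgets B and valuations v, both functions nat => real.\<close>

definition opp :: "nat \<Rightarrow> nat" where
  "opp i = 3 - i"

text \<open>Probability that player i wins the item when bidding x against an opponent bid y,
  including the tie-breaking rule of the paper.\<close>
definition win_prob :: "(nat \<Rightarrow> real) \<Rightarrow> (nat \<Rightarrow> real) \<Rightarrow> nat \<Rightarrow> real \<Rightarrow> real \<Rightarrow> real" where
  "win_prob B v i x y =
    (if x > y then 1
     else if x < y then 0
     else if x = min (min (B 1) (B 2)) (min (v 1) (v 2))
             \<and> min (B i) (v i) > min (B (opp i)) (v (opp i)) then 1
     else if x = min (min (B 1) (B 2)) (min (v 1) (v 2))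
             \<and> min (B (opp i)) (v (opp i)) > min (B i) (v i) then 0
     else 1/2)"

definition util :: "(nat \<Rightarrow> real) \<Rightarrow> (nat \<Rightarrow> real) \<Rightarrow> nat \<Rightarrow> real \<Rightarrow> real \<Rightarrow> real" where
  "util B v i x y = v i * win_prob B v i x y - x"

definition mixed_strategy :: "real \<Rightarrow> real measure \<Rightarrow> bool" where
  "mixed_strategy b M \<longleftrightarrow> prob_space M \<and> sets M = sets borel \<and> measure M {0..b} = 1"

definition exp_util :: "(nat \<Rightarrow> real) \<Rightarrow> (nat \<Rightarrow> real) \<Rightarrow> nat \<Rightarrow> real measure \<Rightarrow> real measure \<Rightarrow> real" where
  "exp_util B v i M N = (\<integral>p. util B v i (fst p) (snd p) \<partial>(M \<Otimes>\<^sub>M N))"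

definition nash :: "(nat \<Rightarrow> real) \<Rightarrow> (nat \<Rightarrow> real) \<Rightarrow> (nat \<Rightarrow> real measure) \<Rightarrow> bool" where
  "nash B v F \<longleftrightarrow>
     (\<forall>i\<in>{1,2}. mixed_strategy (B i) (F i)) \<and>
     (\<forall>i\<in>{1,2}. \<forall>G. mixed_strategy (B i) G \<longrightarrow>
         exp_util B v i G (F (opp i)) \<le> exp_util B v i (F i) (F (opp i)))"

definition Supp :: "real measure \<Rightarrow> real set" where
  "Supp M = {x. \<forall>e>0. measure M (ball x e) > 0}"

definition sup_supp :: "real measure \<Rightarrow> real" where
  "sup_supp M = Sup (Supp M)"

definition inf_supp :: "real measure \<Rightarrow> real" where
  "inf_supp M = Inf (Supp M)"

end

theory Submission
  imports Defs
begin

text \<open>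
  Only two consequences of the equilibrium property are used: no pure bid earns more than the
  equilibrium payoff, and every set of bids of positive probability contains a bid earning at
  least that payoff.

  If the lowest bid c of a player is positive, the opponent bids nothing in (0, c), as such bids
  lose for sure. Then both players must have atoms at c, and at a common atom each player must
  win ties unless he cannot bid higher; this forces both budgets to equal c. Hence unequal
  budgets force both lowest bids to be 0.

  With equal budgets b of at most half of both valuations, the lowest bids cannot both be 0:
  bidding b would then earn each player a positive payoff, which forces atoms at 0 for both, and
  one of them should rather overbid slightly. So one player bids b surely. If b is below half of
  both valuations, the opponent then bids b surely as well. If b = v i / 2 for the player i of
  lower valuation, the opponent of i bids b surely, and i either does so too or bids down to 0.
\<close>

section \<open>Distributions on the real line\<close>

context finite_borel_measure
begin

lemma measure_atMost_eq: "measure M {..x} = measure M {..<x} + measure M {x}"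
  unfolding ivl_disj_un(2)[symmetric] by (subst finite_measure_Union) auto

lemma measure_lessThan_split:
  "a \<le> b \<Longrightarrow> measure M {..<b} = measure M {..<a} + measure M {a..<b}"
  by (subst finite_measure_Union[symmetric]) (auto intro!: arg_cong[where f="measure M"])

lemma cdf_right_limit:
  assumes "\<eta> > 0"
  obtains d where "d > 0" "cdf M (c + d) < cdf M c + \<eta>"
proof -
  have "\<forall>\<^sub>F y in at_right c. cdf M y < cdf M c + \<eta>"
    using cdf_is_right_cont[of c] assms
    unfolding continuous_within by (auto intro: order_tendstoD)
  then obtain b where "b > c" "\<And>y. c < y \<Longrightarrow> y < b \<Longrightarrow> cdf M y < cdf M c + \<eta>"
    by (auto simp: eventually_at_right_field)
  then show thesis by (intro that[of "(b - c) / 2"]) (auto simp: field_simps)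
qed

lemma inf_supp_eqI:
  assumes below: "measure M {..<c} = 0" and above: "\<And>e. e > 0 \<Longrightarrow> measure M {..<c + e} > 0"
  shows "inf_supp M = c"
proof -
  have "c \<in> Supp M"
    unfolding Supp_def
  proof (intro CollectI allI impI)
    fix e :: real assume "e > 0"
    then have "0 < measure M {c..<c + e}"
      using above[of e] below measure_lessThan_split[of c "c + e"] by simp
    also have "\<dots> \<le> measure M (ball c e)"
      by (rule finite_measure_mono) (auto simp: dist_real_def)
    finally show "measure M (ball c e) > 0" .
  qed
  moreover have "c \<le> x" if "x \<in> Supp M" for x
  proof (rule ccontr)
    assume "\<not> c \<le> x"
    then have "measure M (ball x (c - x)) > 0" using that unfolding Supp_def by simp
    moreover have "measure M (ball x (c - x)) \<le> measure M {..<c}"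
      by (rule finite_measure_mono) (auto simp: dist_real_def)
    ultimately show False using below by simp
  qed
  ultimately show ?thesis unfolding inf_supp_def by (rule cInf_eq_minimum)
qed

end

context real_distribution
begin

lemma inf_supp_mass:
  assumes "measure M {..<a} = 0"
  shows "a \<le> inf_supp M" "measure M {..<inf_supp M} = 0"
    "\<And>e. e > 0 \<Longrightarrow> measure M {..<inf_supp M + e} > 0"
proof -
  define S where "S = {t. measure M {..<t} = 0}"
  obtain t where t: "cdf M t > 1/2"
    using order_tendstoD(1)[OF cdf_lim_at_top_prob, of "1/2"] eventually_at_top_linorder by force
  have "s \<le> t" if "s \<in> S" for s
  proof (rule ccontr)
    assume "\<not> s \<le> t"
    then have "cdf M t \<le> measure M {..<s}" unfolding cdf_def by (intro finite_measure_mono) auto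
    then show False using that t unfolding S_def by simp
  qed
  then have bdd: "bdd_above S" by (auto simp: bdd_above_def)
  define c where "c = Sup S"
  have "a \<in> S" using assms unfolding S_def by simp
  then have ac: "a \<le> c" unfolding c_def using bdd by (rule cSup_upper)
  have "\<forall>\<^sub>F s in at_left c. cdf M s = 0"
  proof (rule eventually_at_leftI)
    fix s assume "s \<in> {c - 1<..<c}"
    then obtain s' where "s' \<in> S" "s < s'" using less_cSupD[of S s] \<open>a \<in> S\<close> unfolding c_def by auto
    then have "cdf M s \<le> measure M {..<s'}" unfolding cdf_def by (intro finite_measure_mono) auto
    then show "cdf M s = 0" using \<open>s' \<in> S\<close> cdf_nonneg[of s] unfolding S_def by simp
  qed simp
  then have below: "measure M {..<c} = 0"
    using tendsto_unique[OF _ cdf_at_left[of c]] tendsto_eventually by fastforce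
  have above: "measure M {..<c + e} > 0" if "e > 0" for e
  proof (rule ccontr)
    assume "\<not> ?thesis"
    then have "c + e \<in> S" unfolding S_def using measure_nonneg[of M "{..<c + e}"] by simp
    then show False using cSup_upper[OF _ bdd] that unfolding c_def by fastforce
  qed
  have "inf_supp M = c" using inf_supp_eqI below above by blast
  then show "a \<le> inf_supp M" "measure M {..<inf_supp M} = 0"
    "\<And>e. e > 0 \<Longrightarrow> measure M {..<inf_supp M + e} > 0"
    using ac below above by simp_all
qed

lemma Supp_point_mass:
  assumes "measure M {c} = 1"
  shows "Supp M = {c}"
proof (intro set_eqI iffI)
  fix x assume x: "x \<in> Supp M"
  show "x \<in> {c}"
  proof (rule ccontr)
    assume "x \<notin> {c}"
    then have "measure M (ball x (dist x c)) > 0" using x unfolding Supp_def by simp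
    moreover have "measure M (ball x (dist x c)) \<le> measure M (UNIV - {c})"
      by (rule finite_measure_mono) auto
    ultimately show False using prob_compl[of "{c}"] assms by simp
  qed
next
  fix x assume "x \<in> {c}"
  then show "x \<in> Supp M"
    unfolding Supp_def using assms finite_measure_mono[of "{c}" "ball c _"] by fastforce
qed

lemma inf_sup_supp_point_mass:
  assumes "measure M {c} = 1"
  shows "inf_supp M = c" "sup_supp M = c"
  using Supp_point_mass[OF assms] unfolding inf_supp_def sup_supp_def by simp_all

end

section \<open>Mixed strategies and expected utilities\<close>

lemma mixed_strategy_real_distribution: "mixed_strategy b M \<Longrightarrow> real_distribution M"
  unfolding mixed_strategy_def real_distribution_def real_distribution_axioms_def by simp

lemma mixed_strategy_AE:
  assumes "mixed_strategy b M"
  shows "AE x in M. x \<in> {0..b}"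
proof -
  interpret real_distribution M using assms by (rule mixed_strategy_real_distribution)
  show ?thesis using assms unfolding mixed_strategy_def by (intro AE_prob_1) simp
qed

lemma mixed_strategy_measure_outside:
  assumes "mixed_strategy b M" "A \<in> sets borel" "A \<inter> {0..b} = {}"
  shows "measure M A = 0"
proof -
  interpret real_distribution M using assms(1) by (rule mixed_strategy_real_distribution)
  have "measure M A \<le> measure M (UNIV - {0..b})"
    using assms(2,3) by (intro finite_measure_mono) auto
  also have "\<dots> = 0"
    using prob_compl[of "{0..b}"] assms(1) unfolding mixed_strategy_def by simp
  finally show ?thesis by (simp add: measure_le_0_iff)
qed

lemma mixed_strategy_measure_atMost:
  assumes "mixed_strategy b M"
  shows "measure M {..b} = 1"
proof -
  interpret real_distribution M using assms by (rule mixed_strategy_real_distribution)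
  have "measure M {0..b} \<le> measure M {..b}" by (intro finite_measure_mono) auto
  then show ?thesis using assms prob_le_1 unfolding mixed_strategy_def by (metis antisym)
qed

lemma mixed_strategy_inf_supp:
  assumes "mixed_strategy b M"
  shows "inf_supp M \<in> {0..b}" "measure M {..<inf_supp M} = 0"
    "\<And>e. e > 0 \<Longrightarrow> measure M {..<inf_supp M + e} > 0"
proof -
  interpret real_distribution M using assms by (rule mixed_strategy_real_distribution)
  have "measure M {..<0} = 0" by (rule mixed_strategy_measure_outside[OF assms]) auto
  note mass = inf_supp_mass[OF this]
  have "\<not> b < inf_supp M"
  proof
    assume "b < inf_supp M"
    then have "measure M {..b} \<le> measure M {..<inf_supp M}" by (intro finite_measure_mono) auto
    then show False using mass(2) mixed_strategy_measure_atMost[OF assms] by simp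
  qed
  then show "inf_supp M \<in> {0..b}" using mass(1) by simp
  show "measure M {..<inf_supp M} = 0" "\<And>e. e > 0 \<Longrightarrow> measure M {..<inf_supp M + e} > 0"
    using mass(2,3) by simp_all
qed

lemma mixed_strategy_return: "x \<in> {0..b} \<Longrightarrow> mixed_strategy b (return borel x)"
  unfolding mixed_strategy_def by (auto intro!: prob_space_return simp: measure_return)

lemma opp_simps [simp]: "opp 1 = 2" "opp 2 = 1" "opp (Suc 0) = 2"
  by (simp_all add: opp_def)

lemma opp_player: "k \<in> {1,2} \<Longrightarrow> opp k \<in> {1,2}"
  by (auto simp: opp_def)

lemma opp_opp: "k \<in> {1,2} \<Longrightarrow> opp (opp k) = k"
  by (auto simp: opp_def)

lemma win_prob_bounds: "0 \<le> win_prob B v k x y" "win_prob B v k x y \<le> 1"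
  unfolding win_prob_def by auto

lemma win_prob_tie_cases:
  "win_prob B v k x x = 0 \<or> win_prob B v k x x = 1/2 \<or> win_prob B v k x x = 1"
  unfolding win_prob_def by auto

lemma win_prob_tie_opp:
  assumes "k \<in> {1,2}" "win_prob B v k x x = 1"
  shows "win_prob B v (opp k) x x = 0"
proof -
  have "x = min (min (B 1) (B 2)) (min (v 1) (v 2)) \<and> min (B (opp k)) (v (opp k)) < min (B k) (v k)"
    using assms(2) unfolding win_prob_def by (simp split: if_splits)
  then show ?thesis unfolding win_prob_def opp_opp[OF assms(1)] by auto
qed

lemma win_prob_tie_half:
  assumes "x \<noteq> min (min (B 1) (B 2)) (min (v 1) (v 2)) \<or> min (B k) (v k) = min (B (opp k)) (v (opp k))"
  shows "win_prob B v k x x = 1/2"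
  using assms unfolding win_prob_def by auto

definition pure_util :: "(nat \<Rightarrow> real) \<Rightarrow> (nat \<Rightarrow> real) \<Rightarrow> nat \<Rightarrow> real measure \<Rightarrow> real \<Rightarrow> real" where
  "pure_util B v k N x = v k * (measure N {..<x} + win_prob B v k x x * measure N {x}) - x"

lemma pure_util_ge:
  assumes "v k \<ge> 0"
  shows "v k * measure N {..<x} - x \<le> pure_util B v k N x"
  using assms win_prob_bounds[of B v k x x] unfolding pure_util_def
  by (simp add: distrib_left)

lemma pure_util_le:
  assumes "real_distribution N" "v k \<ge> 0"
  shows "pure_util B v k N x \<le> v k * measure N {..x} - x"
proof -
  interpret real_distribution N by fact
  have "win_prob B v k x x * measure N {x} \<le> measure N {x}"
    using win_prob_bounds[of B v k x x] by (simp add: mult_left_le_one_le)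
  then have "v k * (measure N {..<x} + win_prob B v k x x * measure N {x})
      \<le> v k * (measure N {..<x} + measure N {x})"
    using assms(2) by (intro mult_left_mono) auto
  then show ?thesis unfolding pure_util_def measure_atMost_eq by linarith
qed

lemma abs_pure_util_le:
  assumes "real_distribution N" "v k \<ge> 0" "x \<in> {0..b}"
  shows "\<bar>pure_util B v k N x\<bar> \<le> v k + b"
proof -
  interpret real_distribution N by fact
  have "0 \<le> v k * measure N {..<x}" "v k * measure N {..x} \<le> v k"
    using assms(2) by (simp_all add: mult_left_le)
  then show ?thesis
    using assms(3) pure_util_ge[where v=v and k=k and N=N and B=B and x=x, OF assms(2)]
      pure_util_le[where v=v and k=k and B=B and x=x, OF assms(1,2)]
    unfolding abs_le_iff by auto
qed

lemma integral_util:
  assumes "real_distribution N"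
  shows "(\<integral>y. util B v k x y \<partial>N) = pure_util B v k N x"
proof -
  interpret real_distribution N by fact
  have "util B v k x y =
      v k * indicator {..<x} y + v k * win_prob B v k x x * indicator {x} y - x" for y
    by (cases "y < x"; cases "y = x") (simp_all add: util_def win_prob_def)
  then have util_eq: "util B v k x =
      (\<lambda>y. v k * indicator {..<x} y + v k * win_prob B v k x x * indicator {x} y - x)" ..
  have "integrable N (indicator A :: real \<Rightarrow> real)" if "A \<in> sets borel" for A
    using that by (intro integrable_real_indicator) (auto simp: less_top[symmetric])
  moreover have "prob UNIV = 1" using prob_space by simp
  ultimately show ?thesis
    unfolding pure_util_def util_eq
    by (subst Bochner_Integration.integral_diff) (auto simp: algebra_simps)
qed

lemma borel_measurable_util:
  assumes "sets M = sets borel" "sets N = sets borel"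
  shows "(\<lambda>p. util B v k (fst p) (snd p)) \<in> borel_measurable (M \<Otimes>\<^sub>M N)"
proof -
  have "sets (M \<Otimes>\<^sub>M N) = sets (borel \<Otimes>\<^sub>M borel)"
    using assms by (intro sets_pair_measure_cong)
  moreover have "(\<lambda>p. util B v k (fst p) (snd p)) \<in> borel_measurable (borel \<Otimes>\<^sub>M borel)"
    unfolding util_def win_prob_def by measurable
  ultimately show ?thesis by (simp cong: measurable_cong_sets)
qed

lemma borel_measurable_pure_util:
  assumes "real_distribution N"
  shows "pure_util B v k N \<in> borel_measurable borel"
proof -
  interpret real_distribution N by fact
  have "(\<lambda>p. util B v k (fst p) (snd p)) \<in> borel_measurable (borel \<Otimes>\<^sub>M N)"
    by (rule borel_measurable_util) simp_all
  then have "(\<lambda>x. \<integral>y. util B v k x y \<partial>N) \<in> borel_measurable borel"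
    by (intro borel_measurable_lebesgue_integral) (simp add: case_prod_beta')
  then show ?thesis using integral_util[OF assms] by simp
qed

lemma exp_util_eq_integral:
  assumes M: "mixed_strategy b M" and N: "real_distribution N" and "v k \<ge> 0"
  shows "exp_util B v k M N = (\<integral>x. pure_util B v k N x \<partial>M)"
proof -
  interpret M: real_distribution M using M by (rule mixed_strategy_real_distribution)
  interpret N: real_distribution N by fact
  interpret pair_prob_space M N
    by (simp add: pair_prob_space_def pair_sigma_finite_def M.prob_space_axioms N.prob_space_axioms
        prob_space_imp_sigma_finite)
  have meas: "(\<lambda>p. util B v k (fst p) (snd p)) \<in> borel_measurable (M \<Otimes>\<^sub>M N)"
    by (rule borel_measurable_util) simp_all
  have bound: "\<bar>util B v k x y\<bar> \<le> v k + b" if "x \<in> {0..b}" for x y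
  proof -
    have "0 \<le> v k * win_prob B v k x y" "v k * win_prob B v k x y \<le> v k"
      using win_prob_bounds[of B v k x y] \<open>v k \<ge> 0\<close> by (auto intro: mult_left_le)
    then show ?thesis using that unfolding util_def by auto
  qed
  have "AE x in M. AE y in N. \<bar>util B v k (fst (x, y)) (snd (x, y))\<bar> \<le> v k + b"
    using mixed_strategy_AE[OF M] by eventually_elim (simp add: bound)
  then have "AE p in M \<Otimes>\<^sub>M N. \<bar>util B v k (fst p) (snd p)\<bar> \<le> v k + b"
    by (rule AE_pair_measure[rotated]) (use meas in measurable)
  then have "AE p in M \<Otimes>\<^sub>M N. norm (util B v k (fst p) (snd p)) \<le> norm (v k + b)"
    by eventually_elim simp
  then have "integrable (M \<Otimes>\<^sub>M N) (\<lambda>p. util B v k (fst p) (snd p))"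
    by (rule Bochner_Integration.integrable_bound[OF P.integrable_const meas])
  then have "exp_util B v k M N = (\<integral>x. (\<integral>y. util B v k x y \<partial>N) \<partial>M)"
    unfolding exp_util_def using integral_fst' by fastforce
  then show ?thesis by (simp add: integral_util[OF N])
qed

section \<open>Equilibria\<close>

locale all_pay_equilibrium =
  fixes B v :: "nat \<Rightarrow> real" and F :: "nat \<Rightarrow> real measure"
  assumes budgets: "\<forall>i\<in>{1,2}. B i \<ge> 0"
    and vals: "\<forall>i\<in>{1,2}. v i > 0"
    and eq: "nash B v F"
begin

lemma strategy: "k \<in> {1,2} \<Longrightarrow> mixed_strategy (B k) (F k)"
  using eq unfolding nash_def by blast

lemma distr: "k \<in> {1,2} \<Longrightarrow> real_distribution (F k)"
  using strategy by (rule mixed_strategy_real_distribution)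

lemma val_pos: "k \<in> {1,2} \<Longrightarrow> 0 < v k"
  using vals by auto

lemma budget_nonneg: "k \<in> {1,2} \<Longrightarrow> 0 \<le> B k"
  using budgets by auto

lemma pure_util_bounds:
  assumes "k \<in> {1,2}" "l \<in> {1,2}"
  shows "v k * measure (F l) {..<x} - x \<le> pure_util B v k (F l) x"
    and "pure_util B v k (F l) x \<le> v k * measure (F l) {..x} - x"
  using val_pos[OF assms(1)] pure_util_ge[where v=v and k=k]
    pure_util_le[where v=v and k=k, OF distr[OF assms(2)]] by simp_all

lemma measure_below_budget_add_atom:
  assumes k: "k \<in> {1,2}" and "B k = b"
  shows "measure (F k) {..<b} + measure (F k) {b} = 1"
proof -
  interpret K: real_distribution "F k" using k by (rule distr)
  show ?thesis
    using mixed_strategy_measure_atMost[OF strategy[OF k]] assms(2) K.measure_atMost_eq by simp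
qed

definition payoff :: "nat \<Rightarrow> real" where
  "payoff k = exp_util B v k (F k) (F (opp k))"

lemma pure_util_le_payoff:
  assumes k: "k \<in> {1,2}" and x: "x \<in> {0..B k}"
  shows "pure_util B v k (F (opp k)) x \<le> payoff k"
proof -
  have l: "opp k \<in> {1,2}" using k by (rule opp_player)
  have "exp_util B v k (return borel x) (F (opp k)) \<le> payoff k"
    using eq mixed_strategy_return[OF x] k unfolding nash_def payoff_def by blast
  moreover have "exp_util B v k (return borel x) (F (opp k)) = pure_util B v k (F (opp k)) x"
    using val_pos[OF k] exp_util_eq_integral[OF mixed_strategy_return[OF x] distr[OF l]]
      integral_return[OF _ borel_measurable_pure_util[OF distr[OF l]]] by simp
  ultimately show ?thesis by simp
qed

text \<open>Since no pure bid beats the equilibrium payoff, almost every bid of the equilibrium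
  strategy attains it.\<close>

lemma exists_optimal_bid:
  assumes k: "k \<in> {1,2}" and pos: "measure (F k) S > 0"
  shows "\<exists>x\<in>S \<inter> {0..B k}. payoff k \<le> pure_util B v k (F (opp k)) x"
proof (rule ccontr)
  assume none: "\<not> ?thesis"
  have l: "opp k \<in> {1,2}" using k by (rule opp_player)
  interpret real_distribution "F k" using k by (rule distr)
  let ?U = "pure_util B v k (F (opp k))"
  have vk: "v k \<ge> 0" and Bk: "B k \<ge> 0" using val_pos[OF k] budget_nonneg[OF k] by auto
  have int: "integrable (F k) ?U"
  proof (rule Bochner_Integration.integrable_bound[of _ "\<lambda>_. v k + B k"])
    show "?U \<in> borel_measurable (F k)"
      using borel_measurable_pure_util[OF distr[OF l]] by simp
    show "AE x in F k. norm (?U x) \<le> norm (v k + B k)"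
      using mixed_strategy_AE[OF strategy[OF k]]
      by eventually_elim (use abs_pure_util_le[where v=v and k=k, OF distr[OF l] vk] vk Bk in auto)
  qed simp
  have "payoff k = (\<integral>x. ?U x \<partial>F k)"
    unfolding payoff_def using exp_util_eq_integral[where v=v and k=k, OF strategy[OF k] distr[OF l] vk] .
  then have "(\<integral>x. payoff k - ?U x \<partial>F k) = 0"
    using prob_space by (simp add: Bochner_Integration.integral_diff[OF _ int])
  moreover have "AE x in F k. 0 \<le> payoff k - ?U x"
    using mixed_strategy_AE[OF strategy[OF k]] by eventually_elim (use pure_util_le_payoff k in auto)
  ultimately have "AE x in F k. payoff k - ?U x = 0"
    using integral_nonneg_eq_0_iff_AE[of "F k" "\<lambda>x. payoff k - ?U x"] int by simp
  then have "AE x in F k. x \<notin> S"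
    using mixed_strategy_AE[OF strategy[OF k]] by eventually_elim (use none in auto)
  moreover have "S \<in> sets (F k)" using pos measure_notin_sets[of S "F k"] by fastforce
  ultimately have "S \<in> null_sets (F k)" by (simp add: AE_iff_null_sets)
  then show False using pos by (simp add: measure_def null_setsD1)
qed

lemma payoff_nonneg:
  assumes k: "k \<in> {1,2}"
  shows "0 \<le> payoff k"
proof -
  have "0 \<le> v k * measure (F (opp k)) {..<0}"
    using val_pos[OF k] by simp
  also have "\<dots> \<le> pure_util B v k (F (opp k)) 0"
    using pure_util_bounds(1)[OF k opp_player[OF k], of 0] by simp
  also have "\<dots> \<le> payoff k"
    using pure_util_le_payoff[OF k] budget_nonneg[OF k] by simp
  finally show ?thesis .
qed

text \<open>Bids below all of the opponent's bids lose for sure and earn minus themselves.\<close>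

lemma measure_losing_bids:
  assumes k: "k \<in> {1,2}" and none: "measure (F (opp k)) {..<c} = 0" and "S \<subseteq> {..<c}"
    and costly: "\<And>x. x \<in> S \<Longrightarrow> 0 \<le> x \<Longrightarrow> - x < payoff k"
  shows "measure (F k) S = 0"
proof (rule ccontr)
  assume "measure (F k) S \<noteq> 0"
  then obtain x where x: "x \<in> S" "x \<in> {0..B k}" and opt: "payoff k \<le> pure_util B v k (F (opp k)) x"
    using exists_optimal_bid[OF k, of S] measure_nonneg[of "F k" S] by auto
  interpret L: real_distribution "F (opp k)" using opp_player[OF k] by (rule distr)
  have "measure (F (opp k)) {..x} \<le> measure (F (opp k)) {..<c}"
    using x \<open>S \<subseteq> {..<c}\<close> by (intro L.finite_measure_mono) auto
  then have "pure_util B v k (F (opp k)) x \<le> - x"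
    using pure_util_bounds(2)[OF k opp_player[OF k], of x] none measure_nonneg[of "F (opp k)" "{..x}"]
    by simp
  then show False using costly[of x] x opt by simp
qed

lemma opp_no_mass_below_inf_supp:
  assumes k: "k \<in> {1,2}"
  shows "measure (F (opp k)) {0<..<inf_supp (F k)} = 0"
proof (rule measure_losing_bids)
  show "opp k \<in> {1,2}" using k by (rule opp_player)
  show "measure (F (opp (opp k))) {..<inf_supp (F k)} = 0"
    using mixed_strategy_inf_supp(2)[OF strategy[OF k]] opp_opp[OF k] by simp
  show "- x < payoff (opp k)" if "x \<in> {0<..<inf_supp (F k)}" for x
    using that payoff_nonneg[OF opp_player[OF k]] by simp
qed auto

text \<open>If the opponent had no atom at the lowest bid c > 0, bids just above c would win with
  hardly more probability than the bid c/2, which costs c/2 less.\<close>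

lemma inf_supp_pos_imp_opp_atom:
  assumes k: "k \<in> {1,2}" and pos: "0 < inf_supp (F k)"
  shows "0 < measure (F (opp k)) {inf_supp (F k)}"
proof (rule ccontr)
  define c where "c = inf_supp (F k)"
  define l where "l = opp k"
  have l: "l \<in> {1,2}" unfolding l_def using k by (rule opp_player)
  interpret K: real_distribution "F k" using k by (rule distr)
  interpret L: real_distribution "F l" using l by (rule distr)
  note inf_k = mixed_strategy_inf_supp[OF strategy[OF k], folded c_def]
  assume "\<not> 0 < measure (F (opp k)) {inf_supp (F k)}"
  then have no_atom: "measure (F l) {c} = 0"
    unfolding c_def l_def using measure_nonneg[of "F (opp k)"] by (simp add: not_less eq_iff)
  define p where "p = measure (F l) {..<c}"
  have "measure (F l) {c/2..<c} \<le> measure (F l) {0<..<c}"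
    using pos by (intro L.finite_measure_mono) (auto simp: c_def)
  then have "measure (F l) {c/2..<c} = 0"
    using opp_no_mass_below_inf_supp[OF k] measure_nonneg[of "F l"] unfolding c_def l_def
    by (simp add: eq_iff)
  then have low: "measure (F l) {..<c/2} = p"
    using L.measure_lessThan_split[of "c/2" c] pos unfolding p_def c_def by simp
  have vk: "0 < v k" using val_pos[OF k] .
  obtain d where d: "0 < d" "cdf (F l) (c + d) < cdf (F l) c + c / (4 * v k)"
    using L.cdf_right_limit[of "c / (4 * v k)"] pos vk unfolding c_def by auto
  have "cdf (F l) c = p" unfolding cdf_def p_def L.measure_atMost_eq no_atom by simp
  have "0 < measure (F k) {c..<c + d}"
    using K.measure_lessThan_split[of c "c + d"] inf_k(2) inf_k(3)[of d] d(1) by simp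
  then obtain x where x: "x \<in> {c..<c + d}" and opt: "payoff k \<le> pure_util B v k (F l) x"
    using exists_optimal_bid[OF k] unfolding l_def by blast
  have "measure (F l) {..x} \<le> cdf (F l) (c + d)"
    unfolding cdf_def using x by (intro L.finite_measure_mono) auto
  then have "v k * measure (F l) {..x} \<le> v k * cdf (F l) (c + d)"
    using vk by simp
  also have "\<dots> < v k * (p + c / (4 * v k))"
    using d(2) vk \<open>cdf (F l) c = p\<close> by simp
  also have "\<dots> = v k * p + c / 4"
    using vk by (simp add: field_simps)
  finally have "v k * measure (F l) {..x} \<le> v k * p + c / 4" by simp
  then have "pure_util B v k (F l) x \<le> v k * p + c / 4 - c"
    using pure_util_bounds(2)[OF k l, of x] x by simp
  moreover have "v k * p - c / 2 \<le> pure_util B v k (F l) (c / 2)"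
    using pure_util_bounds(1)[OF k l, of "c / 2"] low by simp
  moreover have "pure_util B v k (F l) (c / 2) \<le> payoff k"
    using pure_util_le_payoff[OF k, of "c / 2"] inf_k(1) pos unfolding l_def c_def by simp
  ultimately show False using opt pos unfolding c_def by simp
qed

lemma inf_supp_pos_imp_atom:
  assumes k: "k \<in> {1,2}" and pos: "0 < inf_supp (F k)"
  shows "0 < measure (F k) {inf_supp (F k)}"
proof (rule ccontr)
  define c where "c = inf_supp (F k)"
  define l where "l = opp k"
  have l: "l \<in> {1,2}" unfolding l_def using k by (rule opp_player)
  have lk: "opp l = k" unfolding l_def using k by (rule opp_opp)
  interpret K: real_distribution "F k" using k by (rule distr)
  assume "\<not> 0 < measure (F k) {inf_supp (F k)}"
  then have "measure (F k) {..c} = 0"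
    using mixed_strategy_inf_supp(2)[OF strategy[OF k]] measure_nonneg[of "F k"]
    unfolding c_def K.measure_atMost_eq by (simp add: eq_iff)
  then have "pure_util B v l (F k) c \<le> - c"
    using pure_util_bounds(2)[OF l k, of c] by simp
  moreover obtain x where "x \<in> {c}" "payoff l \<le> pure_util B v l (F k) x"
    using exists_optimal_bid[OF l, of "{c}"] inf_supp_pos_imp_opp_atom[OF k pos] lk
    unfolding c_def l_def by auto
  ultimately show False using payoff_nonneg[OF l] pos unfolding c_def by simp
qed

text \<open>A player who does not win ties at a common atom could win them all by overbidding
  slightly.\<close>

lemma common_atom_wins_ties:
  assumes m: "m \<in> {1,2}" and atoms: "0 < measure (F m) {x}" "0 < measure (F (opp m)) {x}"
    and "x < B m"
  shows "win_prob B v m x x = 1"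
proof (rule ccontr)
  define n where "n = opp m"
  have n: "n \<in> {1,2}" unfolding n_def using m by (rule opp_player)
  interpret N: real_distribution "F n" using n by (rule distr)
  obtain y where "y \<in> {x}" "y \<in> {0..B m}" and opt: "payoff m \<le> pure_util B v m (F n) x"
    using exists_optimal_bid[OF m atoms(1)] unfolding n_def by blast
  then have "0 \<le> x" by simp
  define t where "t = win_prob B v m x x"
  assume "win_prob B v m x x \<noteq> 1"
  then have "t \<le> 1/2" using win_prob_tie_cases[of B v m x] unfolding t_def by auto
  define g where "g = v m * (1 - t) * measure (F n) {x}"
  have "0 < g" unfolding g_def using val_pos[OF m] \<open>t \<le> 1/2\<close> atoms(2) n_def by simp
  define e where "e = min (g / 2) (B m - x)"
  have e: "0 < e" "e \<le> g / 2" "x + e \<le> B m"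
    unfolding e_def using \<open>0 < g\<close> \<open>x < B m\<close> by (auto simp: min_def)
  have "measure (F n) {..x} \<le> measure (F n) {..<x + e}"
    using e by (intro N.finite_measure_mono) auto
  then have "v m * measure (F n) {..x} \<le> v m * measure (F n) {..<x + e}"
    using val_pos[OF m] by simp
  then have "v m * measure (F n) {..x} - (x + e) \<le> pure_util B v m (F n) (x + e)"
    using pure_util_bounds(1)[OF m n, of "x + e"] by linarith
  also have "\<dots> \<le> payoff m"
    using pure_util_le_payoff[OF m, of "x + e"] e \<open>0 \<le> x\<close> unfolding n_def by simp
  finally have "v m * measure (F n) {..x} - (x + e) \<le> pure_util B v m (F n) x"
    using opt by simp
  moreover have "v m * measure (F n) {..x} = pure_util B v m (F n) x + x + g"
    unfolding pure_util_def g_def t_def N.measure_atMost_eq by (simp add: algebra_simps)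
  ultimately show False using e \<open>0 < g\<close> by simp
qed

text \<open>A player who loses ties at an atom c > 0 could as well bid c/2 when the opponent puts
  no mass in [c/2, c).\<close>

lemma atom_not_losing_ties:
  assumes m: "m \<in> {1,2}" and atom: "0 < measure (F m) {c}" and "0 < c"
    and gap: "measure (F (opp m)) {c/2..<c} = 0"
  shows "win_prob B v m c c \<noteq> 0"
proof
  define n where "n = opp m"
  have n: "n \<in> {1,2}" unfolding n_def using m by (rule opp_player)
  interpret N: real_distribution "F n" using n by (rule distr)
  obtain y where "y \<in> {c}" "y \<in> {0..B m}" and opt: "payoff m \<le> pure_util B v m (F n) c"
    using exists_optimal_bid[OF m atom] unfolding n_def by blast
  assume "win_prob B v m c c = 0"
  then have "pure_util B v m (F n) c = v m * measure (F n) {..<c/2} - c"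
    using N.measure_lessThan_split[of "c/2" c] gap \<open>0 < c\<close>
    unfolding pure_util_def n_def by simp
  also have "\<dots> < pure_util B v m (F n) (c/2)"
    using pure_util_bounds(1)[OF m n, of "c/2"] \<open>0 < c\<close> by simp
  also have "\<dots> \<le> payoff m"
    using pure_util_le_payoff[OF m, of "c/2"] \<open>y \<in> {c}\<close> \<open>y \<in> {0..B m}\<close> \<open>0 < c\<close>
    unfolding n_def by simp
  finally show False using opt by simp
qed

lemma common_atom_imp_budgets_eq:
  assumes "0 < c"
    and atoms: "\<And>m. m \<in> {1,2} \<Longrightarrow> 0 < measure (F m) {c} \<and> measure (F m) {c/2..<c} = 0"
  shows "B 1 = c \<and> B 2 = c"
proof -
  have "B m = c" if m: "m \<in> {1,2}" for m
  proof -
    have n: "opp m \<in> {1,2}" using m by (rule opp_player)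
    have "win_prob B v (opp m) c c \<noteq> 0"
      using atom_not_losing_ties[OF n _ \<open>0 < c\<close>] atoms[OF m] atoms[OF n]
      unfolding opp_opp[OF m] by blast
    then have "win_prob B v m c c \<noteq> 1"
      using win_prob_tie_opp[OF m] by blast
    then have "\<not> c < B m"
      using common_atom_wins_ties[OF m] atoms[OF m] atoms[OF n] by blast
    moreover have "c \<le> B m"
      using mixed_strategy_measure_outside[OF strategy[OF m], of "{c}"] atoms[OF m]
      by (cases "c \<le> B m") auto
    ultimately show ?thesis by simp
  qed
  then show ?thesis by simp
qed

lemma inf_supp_pos_imp_budgets_eq:
  assumes k: "k \<in> {1,2}" and pos: "0 < inf_supp (F k)"
  shows "B 1 = inf_supp (F k) \<and> B 2 = inf_supp (F k)"
proof (rule common_atom_imp_budgets_eq[OF pos])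
  define c where "c = inf_supp (F k)"
  interpret K: real_distribution "F k" using k by (rule distr)
  interpret L: real_distribution "F (opp k)" using opp_player[OF k] by (rule distr)
  have "measure (F k) {c/2..<c} \<le> measure (F k) {..<c}"
    "measure (F (opp k)) {c/2..<c} \<le> measure (F (opp k)) {0<..<c}"
    using pos unfolding c_def by (intro K.finite_measure_mono L.finite_measure_mono; force)+
  then have gaps: "measure (F k) {c/2..<c} = 0" "measure (F (opp k)) {c/2..<c} = 0"
    using mixed_strategy_inf_supp(2)[OF strategy[OF k]] opp_no_mass_below_inf_supp[OF k]
      measure_nonneg[of "F k"] measure_nonneg[of "F (opp k)"]
    unfolding c_def by (simp_all add: eq_iff)
  fix m :: nat assume "m \<in> {1,2}"
  then have "m = k \<or> m = opp k" using k by (auto simp: opp_def)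
  then show "0 < measure (F m) {c} \<and> measure (F m) {c/2..<c} = 0"
    using inf_supp_pos_imp_atom[OF k pos] inf_supp_pos_imp_opp_atom[OF k pos] gaps
    unfolding c_def by auto
qed

lemma inf_supp_pos_imp_point_mass:
  assumes k: "k \<in> {1,2}" and pos: "0 < inf_supp (F k)"
  shows "measure (F k) {B k} = 1"
proof -
  have "B k = inf_supp (F k)" using inf_supp_pos_imp_budgets_eq[OF k pos] k by auto
  then show ?thesis
    using measure_below_budget_add_atom[OF k] mixed_strategy_inf_supp(2)[OF strategy[OF k]] by simp
qed

lemma point_mass_imp_inf_eq_sup_supp:
  "k \<in> {1,2} \<Longrightarrow> measure (F k) {b} = 1 \<Longrightarrow> inf_supp (F k) = sup_supp (F k)"
  using real_distribution.inf_sup_supp_point_mass[OF distr] by metis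

lemma tie_at_equal_budgets:
  assumes "B 1 = b" "B 2 = b" "2 * b \<le> v 1" "2 * b \<le> v 2" "0 < b" "k \<in> {1,2}"
  shows "win_prob B v k x x = 1/2"
  using assms by (intro win_prob_tie_half) (auto simp: opp_def)

lemma payoff_pos_equal_budgets:
  assumes k: "k \<in> {1,2}" and eq: "B 1 = b" "B 2 = b" "0 < b" "2 * b \<le> v 1" "2 * b \<le> v 2"
    and "0 < measure (F (opp k)) {..<b} \<or> 2 * b < v k"
  shows "0 < payoff k"
proof -
  define l where "l = opp k"
  have l: "l \<in> {1,2}" unfolding l_def using k by (rule opp_player)
  define q where "q = measure (F l) {..<b}"
  have atom: "measure (F l) {b} = 1 - q"
    using measure_below_budget_add_atom[OF l] eq l unfolding q_def by auto
  have "pure_util B v k (F l) b = v k * (1 + q) / 2 - b"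
    unfolding pure_util_def tie_at_equal_budgets[OF eq(1,2,4,5,3) k] atom
    by (simp add: q_def[symmetric] field_simps)
  moreover have "b < v k * (1 + q) / 2"
  proof -
    have "2 * b \<le> v k" "0 \<le> v k * q" using eq k val_pos[OF k] unfolding q_def by auto
    moreover have "0 < v k * q \<or> 2 * b < v k" using assms(7) val_pos[OF k] unfolding q_def l_def by auto
    ultimately show ?thesis by (auto simp: field_simps)
  qed
  moreover have "pure_util B v k (F l) b \<le> payoff k"
    using pure_util_le_payoff[OF k, of b] eq k unfolding l_def by auto
  ultimately show ?thesis by simp
qed

text \<open>A player who bids arbitrarily close to 0 earns nearly nothing with these bids unless the
  opponent has an atom at 0.\<close>

lemma payoff_pos_imp_opp_atom_zero:
  assumes k: "k \<in> {1,2}" and "0 < payoff k" and inf0: "inf_supp (F k) = 0"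
  shows "0 < measure (F (opp k)) {0}"
proof (rule ccontr)
  define l where "l = opp k"
  have l: "l \<in> {1,2}" unfolding l_def using k by (rule opp_player)
  interpret L: real_distribution "F l" using l by (rule distr)
  have vk: "0 < v k" using val_pos[OF k] .
  assume "\<not> 0 < measure (F (opp k)) {0}"
  then have "measure (F l) {0} = 0"
    unfolding l_def using measure_nonneg[of "F (opp k)" "{0}"] by simp
  moreover have "measure (F l) {..<0} = 0"
    by (rule mixed_strategy_measure_outside[OF strategy[OF l]]) auto
  ultimately have "cdf (F l) 0 = 0"
    unfolding cdf_def L.measure_atMost_eq by simp
  then obtain d where d: "0 < d" "cdf (F l) d < payoff k / v k"
    using L.cdf_right_limit[of "payoff k / v k" 0] \<open>0 < payoff k\<close> vk by auto
  have "0 < measure (F k) {..<d}"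
    using mixed_strategy_inf_supp(3)[OF strategy[OF k] d(1)] inf0 by simp
  then obtain x where x: "x \<in> {..<d}" "x \<in> {0..B k}" and opt: "payoff k \<le> pure_util B v k (F l) x"
    using exists_optimal_bid[OF k] unfolding l_def by blast
  have "measure (F l) {..x} \<le> cdf (F l) d"
    unfolding cdf_def using x by (intro L.finite_measure_mono) auto
  then have "v k * measure (F l) {..x} \<le> v k * cdf (F l) d"
    using vk by simp
  also have "\<dots> < payoff k"
    using d(2) vk by (simp add: field_simps)
  finally show False
    using pure_util_bounds(2)[OF k l, of x] opt x by simp
qed

lemma equal_budgets_inf_supp_pos:
  assumes eq: "B 1 = b" "B 2 = b" "0 < b" "2 * b \<le> v 1" "2 * b \<le> v 2"
  shows "\<exists>k\<in>{1,2}. 0 < inf_supp (F k)"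
proof (rule ccontr)
  assume "\<not> ?thesis"
  then have inf0: "inf_supp (F k) = 0" if "k \<in> {1,2}" for k
    using mixed_strategy_inf_supp(1)[OF strategy[OF that]] that by force
  have atom: "0 < measure (F k) {0}" if k: "k \<in> {1,2}" for k
  proof -
    have l: "opp k \<in> {1,2}" using k by (rule opp_player)
    have "0 < measure (F k) {..<b}"
      using mixed_strategy_inf_supp(3)[OF strategy[OF k] eq(3)] inf0[OF k] by simp
    then have "0 < payoff (opp k)"
      using payoff_pos_equal_budgets[OF l eq] opp_opp[OF k] by simp
    then show ?thesis
      using payoff_pos_imp_opp_atom_zero[OF l _ inf0[OF l]] opp_opp[OF k] by simp
  qed
  have "win_prob B v 1 0 0 = 1"
    using common_atom_wins_ties[of 1 0] atom eq by simp
  moreover have "win_prob B v 1 0 0 = 1/2"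
    using eq by (intro win_prob_tie_half) simp
  ultimately show False by simp
qed

lemma equal_budgets_point_mass_opp:
  assumes k: "k \<in> {1,2}" and eq: "B 1 = b" "B 2 = b" "0 < b" "2 * b < v 1" "2 * b < v 2"
    and pure: "measure (F k) {b} = 1"
  shows "measure (F (opp k)) {b} = 1"
proof -
  define l where "l = opp k"
  have l: "l \<in> {1,2}" unfolding l_def using k by (rule opp_player)
  have lk: "opp l = k" unfolding l_def using k by (rule opp_opp)
  have "0 < payoff l"
    using payoff_pos_equal_budgets[of l b] l eq by auto
  moreover have "measure (F k) {..<b} = 0"
    using measure_below_budget_add_atom[OF k] pure eq k by auto
  ultimately have "measure (F l) {..<b} = 0"
    using measure_losing_bids[OF l, of b] lk by fastforce
  then show ?thesis
    using measure_below_budget_add_atom[OF l] eq l unfolding l_def by auto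
qed

text \<open>With valuation 2b, the bid b earns b q, where q is the opponent's mass below b; since that
  mass sits at 0, a tiny bid earns nearly 2 b q.\<close>

lemma half_valuation_point_mass_opp_no_low_bids:
  assumes i: "i \<in> {1,2}" and eq: "B 1 = b" "B 2 = b" "0 < b" "v i = 2 * b" "2 * b \<le> v (opp i)"
    and pure: "measure (F i) {b} = 1" and gap: "measure (F (opp i)) {0<..<b} = 0"
  shows "measure (F (opp i)) {..<b} = 0"
proof (rule ccontr)
  define j where "j = opp i"
  have j: "j \<in> {1,2}" unfolding j_def using i by (rule opp_player)
  interpret J: real_distribution "F j" using j by (rule distr)
  define q where "q = measure (F j) {..<b}"
  assume "measure (F (opp i)) {..<b} \<noteq> 0"
  then have "0 < q" using measure_nonneg[of "F j"] unfolding q_def j_def by (simp add: less_le)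
  have "q \<le> 1" unfolding q_def by simp
  have atom: "measure (F j) {b} = 1 - q"
    using measure_below_budget_add_atom[OF j] eq j unfolding q_def by auto
  have tie: "win_prob B v i b b = 1/2"
    using eq i by (intro win_prob_tie_half) (auto simp: opp_def)
  have "pure_util B v i (F j) b = b * q"
    unfolding pure_util_def tie atom eq(4) by (simp add: q_def[symmetric] field_simps)
  moreover obtain y where "y \<in> {b}" "payoff i \<le> pure_util B v i (F j) y"
    using exists_optimal_bid[OF i, of "{b}"] pure unfolding j_def by auto
  ultimately have opt: "payoff i \<le> b * q" by simp
  define e where "e = b * q / 2"
  have e: "0 < e" "e < b"
    unfolding e_def using \<open>0 < q\<close> \<open>q \<le> 1\<close> eq(3) by (auto simp: field_simps)
  have "measure (F j) {e..<b} \<le> measure (F j) {0<..<b}"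
    using e by (intro J.finite_measure_mono) auto
  then have "measure (F j) {..<e} = q"
    using J.measure_lessThan_split[of e b] e gap measure_nonneg[of "F j" "{e..<b}"]
    unfolding q_def j_def by simp
  then have "2 * b * q - e \<le> pure_util B v i (F j) e"
    using pure_util_bounds(1)[OF i j, of e] eq(4) by simp
  also have "\<dots> \<le> payoff i"
    using pure_util_le_payoff[OF i, of e] e eq i unfolding j_def by auto
  moreover have "0 < b * q" using \<open>0 < q\<close> eq(3) by simp
  ultimately show False
    using opt unfolding e_def by (simp add: field_simps)
qed

lemma unequal_budgets_inf_supp_zero:
  assumes "B 1 \<noteq> B 2" and k: "k \<in> {1,2}"
  shows "inf_supp (F k) = 0"
  using inf_supp_pos_imp_budgets_eq[OF k] mixed_strategy_inf_supp(1)[OF strategy[OF k]] assms(1)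
  by force

lemma low_budgets_point_masses:
  assumes eq: "B 1 = B 2" "B 2 < min (v 1) (v 2) / 2" and k: "k \<in> {1,2}"
  shows "inf_supp (F k) = sup_supp (F k)"
proof (cases "B 1 = 0")
  case True
  have "measure (F k) {..<0} = 0"
    by (rule mixed_strategy_measure_outside[OF strategy[OF k]]) auto
  then have "measure (F k) {0} = 1"
    using measure_below_budget_add_atom[OF k, of 0] eq True k by auto
  then show ?thesis using point_mass_imp_inf_eq_sup_supp[OF k] by blast
next
  case False
  define b where "b = B 1"
  have eqb: "B 1 = b" "B 2 = b" "0 < b" "2 * b < v 1" "2 * b < v 2"
    using eq budgets False unfolding b_def by auto
  obtain m where m: "m \<in> {1,2}" "0 < inf_supp (F m)"
    using equal_budgets_inf_supp_pos[of b] eqb by auto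
  have "measure (F m) {b} = 1"
    using inf_supp_pos_imp_point_mass[OF m] eqb m by auto
  then have "measure (F (opp m)) {b} = 1"
    by (rule equal_budgets_point_mass_opp[OF m(1) eqb])
  moreover have "k = m \<or> k = opp m" using k m(1) by (auto simp: opp_def)
  ultimately show ?thesis
    using point_mass_imp_inf_eq_sup_supp k \<open>measure (F m) {b} = 1\<close> by metis
qed

lemma half_budget_cases:
  assumes eq: "B 1 = B 2" "B 1 = min (v 1) (v 2) / 2"
    and i: "i \<in> {1,2}" and vi: "v i = min (v 1) (v 2)"
  shows "(inf_supp (F i) = sup_supp (F i) \<and> inf_supp (F (opp i)) = sup_supp (F (opp i)))
    \<or> (inf_supp (F i) = 0 \<and> inf_supp (F (opp i)) = sup_supp (F (opp i)))"
proof -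
  define b where "b = B 1"
  define j where "j = opp i"
  have j: "j \<in> {1,2}" unfolding j_def using i by (rule opp_player)
  have eqb: "B 1 = b" "B 2 = b" "0 < b" "2 * b \<le> v 1" "2 * b \<le> v 2"
    using eq vals unfolding b_def by auto
  have vij: "v i = 2 * b" "2 * b \<le> v (opp i)"
    using eq vi i unfolding b_def by (auto simp: opp_def)
  have inf_pos_j: "0 < inf_supp (F j)"
  proof (rule ccontr)
    assume "\<not> 0 < inf_supp (F j)"
    then have inf_j: "inf_supp (F j) = 0"
      using mixed_strategy_inf_supp(1)[OF strategy[OF j]] by simp
    obtain k where k: "k \<in> {1,2}" "0 < inf_supp (F k)"
      using equal_budgets_inf_supp_pos[OF eqb] by blast
    have "k \<noteq> j" using k inf_j by auto
    then have "k = i" using k(1) i unfolding j_def by (auto simp: opp_def)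
    then have pos_i: "0 < inf_supp (F i)" using k by simp
    have "measure (F i) {b} = 1"
      using inf_supp_pos_imp_point_mass[OF i pos_i] eqb i by auto
    moreover have "measure (F j) {0<..<b} = 0"
      using opp_no_mass_below_inf_supp[OF i] inf_supp_pos_imp_budgets_eq[OF i pos_i] eqb
      unfolding j_def by simp
    ultimately have "measure (F j) {..<b} = 0"
      using half_valuation_point_mass_opp_no_low_bids[OF i eqb(1-3) vij] unfolding j_def by simp
    then show False
      using mixed_strategy_inf_supp(3)[OF strategy[OF j] eqb(3)] inf_j by simp
  qed
  have "inf_supp (F j) = sup_supp (F j)"
    using inf_supp_pos_imp_point_mass[OF j inf_pos_j] point_mass_imp_inf_eq_sup_supp[OF j] by blast
  moreover have "inf_supp (F i) = sup_supp (F i) \<or> inf_supp (F i) = 0"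
    using inf_supp_pos_imp_point_mass[OF i] point_mass_imp_inf_eq_sup_supp[OF i]
      mixed_strategy_inf_supp(1)[OF strategy[OF i]] by force
  ultimately show ?thesis unfolding j_def by blast
qed

end

theorem lemma8:
  fixes B v :: "nat \<Rightarrow> real" and F :: "nat \<Rightarrow> real measure"
  assumes budgets: "\<forall>i\<in>{1,2}. B i \<ge> 0"
    and vals: "\<forall>i\<in>{1,2}. v i > 0"
    and eq: "nash B v F"
  shows "(B 1 = B 2 \<and> B 2 < min (v 1) (v 2) / 2 \<longrightarrow>
            (\<forall>i\<in>{1,2}. inf_supp (F i) = sup_supp (F i)))
       \<and> (B 1 = B 2 \<and> B 1 = min (v 1) (v 2) / 2 \<longrightarrow>
            (\<forall>i\<in>{1,2}. v i = min (v 1) (v 2) \<longrightarrow>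
               ((inf_supp (F i) = sup_supp (F i) \<and>
                 inf_supp (F (opp i)) = sup_supp (F (opp i)))
              \<or> (inf_supp (F i) = 0 \<and>
                 inf_supp (F (opp i)) = sup_supp (F (opp i))))))
       \<and> (B 1 \<noteq> B 2 \<longrightarrow> inf_supp (F 1) = 0 \<and> inf_supp (F 2) = 0)"
proof -
  interpret all_pay_equilibrium B v F using assms by (rule all_pay_equilibrium.intro)
  show ?thesis
    using low_budgets_point_masses half_budget_cases unequal_budgets_inf_supp_zero by simp
qed

end
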